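(* Let $Q(x,y)=\sum_{j=1}^{k}a_j x^{e_{j1}}y^{e_{j2}}$ with $a_j\in\mathbb{R}$ and $e_{j1},e_{j2}\in\mathbb{Z}$. Define $g_2(x,y)=-\frac12\big(Q(x,y)+Q(x^{-1},y^{-1})\big)$ and $\overline{g_2}(x,y)=1$ if $|g_2(x,y)|\ge1$, $\overline{g_2}(x,y)=0$ otherwise. For an integer $m\ge1$ set $$LC(W(x,x^m))=\frac{1}{2\pi}\int_0^{2\pi}\overline{g_2}(e^{it},e^{imt})\,dt,\qquad LC(W(x,y))=\frac{1}{(2\pi)^2}\int_0^{2\pi}\!\!\int_0^{2\pi}\overline{g_2}(e^{it_1},e^{it_2})\,dt_1\,dt_2.$$ Then $LC(W(x,x^m))\to LC(W(x,y))$ as $m\to\infty$.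
   Context: Motivation for notation: for $n$ larger than all $|e_{ji}|$, $W(x,y)=(xy)^n\big((xy)^n+(xy)^{-n}+Q(x,y)+Q(x^{-1},y^{-1})\big)$ is a polynomial, and $LC(W)$ generalises the limiting proportion of non-unimodular roots. On the torus $|x|=|y|=1$ the function $g_2$ is real-valued since the $a_j$ are real. *)

theory Defs
  imports "HOL-Analysis.Analysis"
begin

definition Qpoly :: "nat \<Rightarrow> (nat \<Rightarrow> real) \<Rightarrow> (nat \<Rightarrow> int) \<Rightarrow> (nat \<Rightarrow> int) \<Rightarrow> complex \<Rightarrow> complex \<Rightarrow> complex" where
  "Qpoly k a e1 e2 x y = (\<Sum>j=1..k. complex_of_real (a j) * x powi (e1 j) * y powi (e2 j))"

definition g2 :: "nat \<Rightarrow> (nat \<Rightarrow> real) \<Rightarrow> (nat \<Rightarrow> int) \<Rightarrow> (nat \<Rightarrow> int) \<Rightarrow> complex \<Rightarrow> complex \<Rightarrow> complex" where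
  "g2 k a e1 e2 x y = - (1/2) * (Qpoly k a e1 e2 x y + Qpoly k a e1 e2 (inverse x) (inverse y))"

definition g2bar :: "nat \<Rightarrow> (nat \<Rightarrow> real) \<Rightarrow> (nat \<Rightarrow> int) \<Rightarrow> (nat \<Rightarrow> int) \<Rightarrow> complex \<Rightarrow> complex \<Rightarrow> real" where
  "g2bar k a e1 e2 x y = (if norm (g2 k a e1 e2 x y) \<ge> 1 then 1 else 0)"

definition LC1 :: "nat \<Rightarrow> (nat \<Rightarrow> real) \<Rightarrow> (nat \<Rightarrow> int) \<Rightarrow> (nat \<Rightarrow> int) \<Rightarrow> nat \<Rightarrow> real" where
  "LC1 k a e1 e2 m = 1 / (2 * pi) *
     integral {0..2*pi} (\<lambda>t. g2bar k a e1 e2 (exp (\<i> * complex_of_real t)) (exp (\<i> * complex_of_real (real m * t))))"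

definition LC2 :: "nat \<Rightarrow> (nat \<Rightarrow> real) \<Rightarrow> (nat \<Rightarrow> int) \<Rightarrow> (nat \<Rightarrow> int) \<Rightarrow> real" where
  "LC2 k a e1 e2 = 1 / (2 * pi)^2 *
     integral {0..2*pi} (\<lambda>t1. integral {0..2*pi} (\<lambda>t2.
        g2bar k a e1 e2 (exp (\<i> * complex_of_real t1)) (exp (\<i> * complex_of_real t2))))"

end

theory Submission
  imports Defs "HOL-Complex_Analysis.Complex_Analysis"
begin

text \<open>
  On the torus, g2 becomes a real trigonometric polynomial F(t1,t2), and the integrand of LC is
  the indicator of |F| \<ge> 1. Cutting [0,2\<pi>] into m pieces and using the 2\<pi>-periodicity in the
  second variable, the integral along the line (t, mt) equals the integral over s of the Riemann
  sum (1/m) \<Sum>j<m. \<phi>((s + 2\<pi>j)/m, s) of the section \<phi>(\<cdot>, s). For fixed s the section is a step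
  function: F(\<cdot>, s)^2 - 1 extends to an entire function, so either it vanishes identically or it has
  finitely many zeros in [0,2\<pi>], and only these can be jumps. Hence each Riemann sum converges at
  rate O(1/m), and dominated convergence together with Fubini yields the double integral.
\<close>

lemma bounded_measurable_set_integrable_Icc:
  fixes g :: "real \<Rightarrow> real"
  assumes "g \<in> borel_measurable borel" and "\<And>x. \<bar>g x\<bar> \<le> B"
  shows "set_integrable lborel {a..b} g"
  unfolding set_integrable_def
  by (rule integrableI_bounded_set[where A="{a..b}" and B=B])
     (use assms in \<open>auto simp: emeasure_lborel_Icc_eq\<close>)

lemma bounded_measurable_integrable_on_Icc:
  fixes g :: "real \<Rightarrow> real"
  assumes "g \<in> borel_measurable borel" and "\<And>x. \<bar>g x\<bar> \<le> B"
  shows "g integrable_on {a..b}"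
  using set_borel_integral_eq_integral(1)[OF bounded_measurable_set_integrable_Icc[OF assms]] .

lemma integral_Icc_eq_lebesgue_integral:
  fixes g :: "real \<Rightarrow> real"
  assumes "g \<in> borel_measurable borel" and "\<And>x. \<bar>g x\<bar> \<le> B"
  shows "integral {a..b} g = (\<integral>x. indicator {a..b} x * g x \<partial>lborel)"
  using set_borel_integral_eq_integral(2)[OF bounded_measurable_set_integrable_Icc[OF assms]]
  by (simp add: set_lebesgue_integral_def)

lemma borel_measurable_section:
  fixes f :: "real \<Rightarrow> real \<Rightarrow> real"
  assumes "(\<lambda>p. f (fst p) (snd p)) \<in> borel_measurable borel"
  shows "f x \<in> borel_measurable borel"
  using measurable_compose[OF _ assms, of "\<lambda>y. (x, y)"]
  by (simp add: borel_measurable_continuous_onI continuous_intros)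

lemma iterated_integral_Icc_eq_lebesgue:
  fixes f :: "real \<Rightarrow> real \<Rightarrow> real"
  assumes f: "(\<lambda>p. f (fst p) (snd p)) \<in> borel_measurable borel" and B: "\<And>x y. \<bar>f x y\<bar> \<le> B"
  shows "integral {a..b} (\<lambda>x. integral {a..b} (\<lambda>y. f x y)) =
         (\<integral>x. \<integral>y. indicator ({a..b} \<times> {a..b}) (x, y) * f x y \<partial>lborel \<partial>lborel)"
proof -
  let ?S = "{a..b}"
  have [measurable]: "(\<lambda>p. f (fst p) (snd p)) \<in> borel_measurable (lborel \<Otimes>\<^sub>M lborel)"
    using f unfolding lborel_prod by simp
  have inner: "integral ?S (f x) = (\<integral>y. indicator ?S y * f x y \<partial>lborel)" for x
    by (rule integral_Icc_eq_lebesgue_integral[OF borel_measurable_section[OF f] B])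
  have "(\<lambda>x. \<integral>y. indicator ?S y * f x y \<partial>lborel) \<in> borel_measurable lborel"
    by measurable
  then have "(\<lambda>x. integral ?S (f x)) \<in> borel_measurable borel"
    by (simp add: inner)
  moreover have "\<bar>integral ?S (f x)\<bar> \<le> B * measure lborel ?S" for x
  proof -
    have "(f x has_integral integral ?S (f x)) (cbox a b)"
      using bounded_measurable_integrable_on_Icc[OF borel_measurable_section[OF f] B]
      by (simp add: has_integral_integral)
    from has_integral_bound[OF order_trans[OF abs_ge_zero B] this] show ?thesis
      using B by simp
  qed
  ultimately have "integral ?S (\<lambda>x. integral ?S (f x)) =
                   (\<integral>x. indicator ?S x * integral ?S (f x) \<partial>lborel)"
    by (rule integral_Icc_eq_lebesgue_integral)
  then show ?thesis
    by (simp add: inner indicator_times mult.assoc)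
qed

lemma integral_Icc_swap_bounded_measurable:
  fixes f :: "real \<Rightarrow> real \<Rightarrow> real"
  assumes f: "(\<lambda>p. f (fst p) (snd p)) \<in> borel_measurable borel" and B: "\<And>x y. \<bar>f x y\<bar> \<le> B"
  shows "integral {a..b} (\<lambda>x. integral {a..b} (\<lambda>y. f x y)) =
         integral {a..b} (\<lambda>y. integral {a..b} (\<lambda>x. f x y))"
proof -
  let ?S = "{a..b}"
  let ?h = "\<lambda>x y. indicator (?S \<times> ?S) (x, y) * f x y"
  have [measurable]: "(\<lambda>p. f (fst p) (snd p)) \<in> borel_measurable (lborel \<Otimes>\<^sub>M lborel)"
    using f unfolding lborel_prod by simp
  have "integrable (lborel \<Otimes>\<^sub>M lborel) (\<lambda>(x, y). ?h x y)"
  proof (rule integrableI_bounded_set[where A="?S \<times> ?S" and B=B])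
    show "emeasure (lborel \<Otimes>\<^sub>M lborel) (?S \<times> ?S) < \<infinity>"
      by (simp add: lborel.emeasure_pair_measure_Times ennreal_mult_less_top emeasure_lborel_Icc_eq)
  qed (auto simp: B abs_mult indicator_def)
  then have fubini: "(\<integral>y. \<integral>x. ?h x y \<partial>lborel \<partial>lborel) = (\<integral>x. \<integral>y. ?h x y \<partial>lborel \<partial>lborel)"
    by (rule lborel_pair.Fubini_integral)
  have "(\<lambda>p. f (snd p) (fst p)) \<in> borel_measurable borel"
    using measurable_compose[OF _ f, of "\<lambda>p. (snd p, fst p)"]
    by (simp add: borel_measurable_continuous_onI continuous_intros)
  from iterated_integral_Icc_eq_lebesgue[of "\<lambda>y x. f x y", OF this B]
  have "integral ?S (\<lambda>y. integral ?S (\<lambda>x. f x y)) = (\<integral>y. \<integral>x. ?h x y \<partial>lborel \<partial>lborel)"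
    by (simp add: indicator_times mult.commute)
  with iterated_integral_Icc_eq_lebesgue[OF f B, of a b] fubini show ?thesis
    by simp
qed

lemma integral_Icc_sum_subintervals:
  fixes f :: "real \<Rightarrow> 'a::banach"
  assumes "0 \<le> h" and "f integrable_on {a..a + real m * h}"
  shows "integral {a..a + real m * h} f = (\<Sum>j<m. integral {a + real j * h..a + real (Suc j) * h} f)"
  using assms(2)
proof (induction m)
  case (Suc m)
  have le: "a \<le> a + real m * h" "a + real m * h \<le> a + real (Suc m) * h"
    using \<open>0 \<le> h\<close> by (simp_all add: algebra_simps)
  then have "f integrable_on {a..a + real m * h}"
    using integrable_on_subinterval[OF Suc.prems] by simp
  then show ?case
    using Henstock_Kurzweil_Integration.integral_combine[OF le Suc.prems] Suc.IH by simp
qed simp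

lemma integral_Icc_affine:
  fixes f :: "real \<Rightarrow> real"
  assumes "0 < c" and "f integrable_on {a..b}"
  shows "integral {(a - d) / c..(b - d) / c} (\<lambda>x. f (c * x + d)) = integral {a..b} f / c"
proof -
  have "(f has_integral integral {a..b} f) (cbox a b)"
    using assms(2) by (simp add: has_integral_integral)
  from has_integral_affinity'[OF this assms(1), of d]
  show ?thesis
    by (simp add: integral_unique divide_inverse mult.commute)
qed

lemma integral_Icc_deviation_from_value:
  fixes \<psi> :: "real \<Rightarrow> real"
  assumes \<psi>: "\<psi> integrable_on {c..d}" and bounds: "\<And>x. 0 \<le> \<psi> x \<and> \<psi> x \<le> 1"
    and \<tau>: "\<tau> \<in> {c..d}"
  shows "\<bar>(d - c) * \<psi> \<tau> - integral {c..d} \<psi>\<bar> \<le> (d - c) * of_bool (\<exists>p\<in>{c..d}. \<psi> p \<noteq> \<psi> \<tau>)"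
proof (cases "\<exists>p\<in>{c..d}. \<psi> p \<noteq> \<psi> \<tau>")
  case True
  have "c \<le> d"
    using \<tau> by simp
  have "0 \<le> integral {c..d} \<psi>"
    using \<psi> bounds by (simp add: integral_nonneg)
  moreover have "integral {c..d} \<psi> \<le> integral {c..d} (\<lambda>_. 1::real)"
    using \<psi> bounds by (intro integral_le) (simp_all add: integrable_const_ivl)
  moreover have "0 \<le> (d - c) * \<psi> \<tau>" "(d - c) * \<psi> \<tau> \<le> d - c"
    using bounds[of \<tau>] \<open>c \<le> d\<close> by (simp_all add: mult_left_le)
  ultimately show ?thesis
    using True \<open>c \<le> d\<close> by (simp add: abs_le_iff)
next
  case False
  then have "integral {c..d} \<psi> = integral {c..d} (\<lambda>_. \<psi> \<tau>)"
    by (intro integral_cong) simp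
  also have "\<dots> = (d - c) * \<psi> \<tau>"
    using \<tau> by simp
  \<comment> \<open>plain simp would loop here: it turns False into the rewrite rule \<psi> p = \<psi> \<tau>, which fires on \<psi> \<tau>\<close>
  finally show ?thesis
    by (simp only: False of_bool_eq mult_zero_right diff_self abs_zero order_refl)
qed

lemma sum_mesh_intervals_containing_le_2:
  assumes "0 < h"
  shows "(\<Sum>j<m. of_bool (z \<in> {real j * h..real (Suc j) * h}) :: real) \<le> 2"
proof -
  let ?J = "{j \<in> {..<m}. z \<in> {real j * h..real (Suc j) * h}}"
  let ?n = "nat \<lfloor>z / h\<rfloor>"
  have "?J \<subseteq> {?n - 1, ?n}"
  proof
    fix j assume "j \<in> ?J"
    then have "real j * h \<le> z" "z \<le> (real j + 1) * h"
      by (auto simp: add.commute)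
    then have "real j \<le> z / h" "z / h \<le> real j + 1"
      using assms by (simp_all add: pos_le_divide_eq pos_divide_le_eq)
    then have "int j \<le> \<lfloor>z / h\<rfloor>" "\<lfloor>z / h\<rfloor> \<le> int j + 1"
      by (simp_all add: le_floor_iff floor_le_iff)
    then show "j \<in> {?n - 1, ?n}"
      by auto
  qed
  then have "card ?J \<le> card {?n - 1, ?n}"
    by (intro card_mono) simp_all
  also have "\<dots> \<le> 2"
    by (simp add: card_insert_if)
  finally show ?thesis
    by (simp add: sum.If_cases Int_def)
qed

lemma riemann_sum_error_finite_jumps:
  fixes \<psi> :: "real \<Rightarrow> real" and Z :: "real set" and \<tau> :: "nat \<Rightarrow> real"
  assumes "0 < h" and \<psi>: "\<psi> integrable_on {0..real m * h}"
    and bounds: "\<And>x. 0 \<le> \<psi> x \<and> \<psi> x \<le> 1" and "finite Z"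
    and jumps: "\<And>p q. 0 \<le> p \<Longrightarrow> p \<le> q \<Longrightarrow> q \<le> real m * h \<Longrightarrow> \<psi> p \<noteq> \<psi> q \<Longrightarrow> \<exists>z\<in>Z. p \<le> z \<and> z \<le> q"
    and \<tau>: "\<And>j. j < m \<Longrightarrow> \<tau> j \<in> {real j * h..real (Suc j) * h}"
  shows "\<bar>h * (\<Sum>j<m. \<psi> (\<tau> j)) - integral {0..real m * h} \<psi>\<bar> \<le> 2 * real (card Z) * h"
proof -
  define I where "I j = {real j * h..real (Suc j) * h}" for j
  have I_sub: "I j \<subseteq> {0..real m * h}" if "j < m" for j
    using that \<open>0 < h\<close> by (auto simp: I_def intro: order_trans[OF _ mult_right_mono[of "real (Suc j)" "real m" h]])
  have jump_in_I: "of_bool (\<exists>p\<in>I j. \<psi> p \<noteq> \<psi> (\<tau> j)) \<le> (\<Sum>z\<in>Z. of_bool (z \<in> I j) :: real)"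
    if j: "j < m" for j
  proof (cases "\<exists>p\<in>I j. \<psi> p \<noteq> \<psi> (\<tau> j)")
    case True
    then obtain p where p: "p \<in> I j" "\<psi> p \<noteq> \<psi> (\<tau> j)"
      by blast
    have "\<exists>z\<in>Z. min p (\<tau> j) \<le> z \<and> z \<le> max p (\<tau> j)"
      using jumps[of "min p (\<tau> j)" "max p (\<tau> j)"] p \<tau>[OF j] I_sub[OF j]
      by (cases "p \<le> \<tau> j") (auto simp: I_def min_def max_def)
    then obtain z where "z \<in> Z" "z \<in> I j"
      using p(1) \<tau>[OF j] unfolding I_def by (smt (verit) atLeastAtMost_iff)
    then show ?thesis
      using member_le_sum[of z Z "\<lambda>z. of_bool (z \<in> I j) :: real"] \<open>finite Z\<close> by simp
  qed (simp add: sum_nonneg)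
  have "\<bar>h * (\<Sum>j<m. \<psi> (\<tau> j)) - integral {0..real m * h} \<psi>\<bar> =
        \<bar>\<Sum>j<m. h * \<psi> (\<tau> j) - integral (I j) \<psi>\<bar>"
    using integral_Icc_sum_subintervals[of h \<psi> 0 m] \<open>0 < h\<close> \<psi>
    by (simp add: I_def sum_distrib_left sum_subtractf)
  also have "\<dots> \<le> (\<Sum>j<m. \<bar>h * \<psi> (\<tau> j) - integral (I j) \<psi>\<bar>)"
    by (rule sum_abs)
  also have "\<dots> \<le> (\<Sum>j<m. h * (\<Sum>z\<in>Z. of_bool (z \<in> I j)))"
  proof (intro sum_mono)
    fix j assume "j \<in> {..<m}"
    then have "\<psi> integrable_on I j"
      using integrable_on_subinterval[OF \<psi>, of "real j * h" "real (Suc j) * h"] I_sub[of j]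
      by (simp add: I_def)
    from integral_Icc_deviation_from_value[OF this[unfolded I_def] bounds \<tau>]
    have "\<bar>h * \<psi> (\<tau> j) - integral (I j) \<psi>\<bar> \<le> h * of_bool (\<exists>p\<in>I j. \<psi> p \<noteq> \<psi> (\<tau> j))"
      using \<open>j \<in> {..<m}\<close> by (simp add: I_def algebra_simps)
    also have "\<dots> \<le> h * (\<Sum>z\<in>Z. of_bool (z \<in> I j))"
      using jump_in_I \<open>j \<in> {..<m}\<close> \<open>0 < h\<close> by (simp add: mult_left_mono)
    finally show "\<bar>h * \<psi> (\<tau> j) - integral (I j) \<psi>\<bar> \<le> h * (\<Sum>z\<in>Z. of_bool (z \<in> I j))" .
  qed
  also have "\<dots> = h * (\<Sum>z\<in>Z. \<Sum>j<m. of_bool (z \<in> I j))"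
    by (simp add: sum_distrib_left sum.swap[of _ Z] mult.commute)
  also have "\<dots> \<le> h * (\<Sum>z\<in>Z. 2)"
    using \<open>0 < h\<close> sum_mesh_intervals_containing_le_2[OF \<open>0 < h\<close>]
    by (intro mult_left_mono sum_mono) (simp_all add: I_def)
  finally show ?thesis
    by (simp add: mult_ac)
qed

lemma entire_real_zeros_Icc_finite:
  fixes H :: "complex \<Rightarrow> complex"
  assumes "H holomorphic_on UNIV"
  shows "(\<forall>z. H z = 0) \<or> finite {t \<in> {a..b}. H (of_real t) = 0}"
proof (rule disjCI)
  let ?U = "complex_of_real ` {t \<in> {a..b}. H (of_real t) = 0}"
  assume "infinite {t \<in> {a..b}. H (of_real t) = 0}"
  then have "infinite ?U"
    by (auto dest: finite_imageD simp: inj_on_def)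
  moreover have "compact (complex_of_real ` {a..b})"
    by (intro compact_continuous_image continuous_intros) auto
  ultimately obtain \<xi> where "\<xi> islimpt ?U"
    unfolding compact_eq_Bolzano_Weierstrass by (metis (no_types, lifting) image_mono mem_Collect_eq subsetI)
  with assms show "\<forall>z. H z = 0"
    by (auto intro: analytic_continuation[of H UNIV ?U \<xi>])
qed

locale torus_step_function =
  fixes \<phi> :: "real \<Rightarrow> real \<Rightarrow> real"
  assumes measurable: "(\<lambda>p. \<phi> (fst p) (snd p)) \<in> borel_measurable borel"
    and bounds: "\<And>t s. 0 \<le> \<phi> t s \<and> \<phi> t s \<le> 1"
    and periodic: "\<And>t s j. \<phi> t (s + 2 * pi * real j) = \<phi> t s"
    and finite_jumps: "\<And>s. \<exists>Z. finite Z \<and>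
           (\<forall>p q. 0 \<le> p \<longrightarrow> p \<le> q \<longrightarrow> q \<le> 2 * pi \<longrightarrow> \<phi> p s \<noteq> \<phi> q s \<longrightarrow> (\<exists>z\<in>Z. p \<le> z \<and> z \<le> q))"
begin

lemma borel_measurable_compose:
  assumes "continuous_on UNIV f" "continuous_on UNIV g"
  shows "(\<lambda>x::real. \<phi> (f x) (g x)) \<in> borel_measurable borel"
  using measurable_compose[OF _ measurable, of "\<lambda>x. (f x, g x)"]
  by (simp add: borel_measurable_continuous_onI continuous_on_Pair assms)

lemma integrable_on_Icc_compose:
  assumes "continuous_on UNIV f" "continuous_on UNIV g"
  shows "(\<lambda>x::real. \<phi> (f x) (g x)) integrable_on {a..b}"
  using bounded_measurable_integrable_on_Icc[OF borel_measurable_compose[OF assms], of 1] bounds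
  by simp

definition riemann_section :: "nat \<Rightarrow> real \<Rightarrow> real" where
  "riemann_section m s = (\<Sum>j<m. \<phi> ((s + 2 * pi * real j) / real m) s) / real m"

lemma borel_measurable_riemann_section: "riemann_section m \<in> borel_measurable borel"
  unfolding riemann_section_def
  by (intro borel_measurable_divide borel_measurable_const borel_measurable_sum
            borel_measurable_compose continuous_intros) auto

lemma riemann_section_bounds: "0 \<le> riemann_section m s" "riemann_section m s \<le> 1"
proof -
  have "0 \<le> (\<Sum>j<m. \<phi> ((s + 2 * pi * real j) / real m) s)"
    by (intro sum_nonneg) (simp add: bounds)
  moreover have "(\<Sum>j<m. \<phi> ((s + 2 * pi * real j) / real m) s) \<le> (\<Sum>j<m. 1)"
    by (intro sum_mono) (simp add: bounds)
  ultimately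
  show "0 \<le> riemann_section m s" "riemann_section m s \<le> 1"
    by (auto simp: riemann_section_def divide_le_eq)
qed

lemma integral_line_eq_integral_riemann_section:
  assumes "0 < m"
  shows "integral {0..2 * pi} (\<lambda>t. \<phi> t (real m * t)) = integral {0..2 * pi} (riemann_section m)"
proof -
  define h where "h = 2 * pi / real m"
  let ?g = "\<lambda>t. \<phi> t (real m * t)"
  let ?piece = "\<lambda>j s. \<phi> ((s + 2 * pi * real j) / real m) s"
  have h: "0 < h" "real m * h = 2 * pi"
    using assms by (simp_all add: h_def)
  have integrable: "?g integrable_on {a..b}" for a b
    by (rule integrable_on_Icc_compose) (intro continuous_intros)+
  have piece: "integral {real j * h..real (Suc j) * h} ?g = integral {0..2 * pi} (?piece j) / real m" for j
  proof -
    have "real m * (1 / real m * s + real j * h) = s + 2 * pi * real j" for s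
      using assms by (simp add: h_def field_simps)
    then have "?g (1 / real m * s + real j * h) = ?piece j s" for s
      using periodic[of _ s j] assms by (simp add: h_def add_divide_distrib mult.commute)
    moreover have "integral {0..2 * pi} (\<lambda>s. ?g (1 / real m * s + real j * h)) =
                   integral {real j * h..real (Suc j) * h} ?g * real m"
      using integral_Icc_affine[of "1 / real m" ?g "real j * h" "real (Suc j) * h" "real j * h"]
        integrable assms h
      by (simp add: field_simps)
    ultimately show ?thesis
      using assms by (simp add: field_simps)
  qed
  have "integral {0..2 * pi} ?g = (\<Sum>j<m. integral {real j * h..real (Suc j) * h} ?g)"
    using integral_Icc_sum_subintervals[of h ?g 0 m] integrable h
    by simp
  also have "\<dots> = (\<Sum>j<m. integral {0..2 * pi} (?piece j)) / real m"
    by (simp only: piece sum_divide_distrib)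
  also have "\<dots> = integral {0..2 * pi} (riemann_section m)"
  proof -
    have "?piece j integrable_on {0..2 * pi}" for j
      by (rule integrable_on_Icc_compose) (use assms in \<open>auto intro!: continuous_intros\<close>)
    then show ?thesis
      by (simp add: riemann_section_def[abs_def] integral_sum)
  qed
  finally show ?thesis .
qed

lemma riemann_section_tendsto:
  assumes s: "s \<in> {0..2 * pi}"
  shows "(\<lambda>m. riemann_section m s) \<longlonglongrightarrow> integral {0..2 * pi} (\<lambda>t. \<phi> t s) / (2 * pi)"
proof -
  let ?I = "integral {0..2 * pi} (\<lambda>t. \<phi> t s)"
  obtain Z where "finite Z" and jumps:
    "\<And>p q. 0 \<le> p \<Longrightarrow> p \<le> q \<Longrightarrow> q \<le> 2 * pi \<Longrightarrow> \<phi> p s \<noteq> \<phi> q s \<Longrightarrow> \<exists>z\<in>Z. p \<le> z \<and> z \<le> q"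
    using finite_jumps[of s] by blast
  have integrable: "(\<lambda>t. \<phi> t s) integrable_on {0..2 * pi}"
    by (rule integrable_on_Icc_compose) (intro continuous_intros)+
  have "\<bar>riemann_section m s - ?I / (2 * pi)\<bar> \<le> 2 * real (card Z) / real m" if "0 < m" for m
  proof -
    define h where "h = 2 * pi / real m"
    have h: "0 < h" "real m * h = 2 * pi"
      using that by (simp_all add: h_def)
    have "(s + 2 * pi * real j) / real m \<in> {real j * h..real (Suc j) * h}" for j
      using s that by (auto simp: h_def field_simps)
    with riemann_sum_error_finite_jumps[of h "\<lambda>t. \<phi> t s" m Z "\<lambda>j. (s + 2 * pi * real j) / real m"]
      h integrable bounds \<open>finite Z\<close> jumps
    have "\<bar>2 * pi * riemann_section m s - ?I\<bar> \<le> 2 * pi * (2 * real (card Z) / real m)"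
      by (simp add: riemann_section_def h_def mult_ac)
    then have "2 * pi * \<bar>riemann_section m s - ?I / (2 * pi)\<bar> \<le> 2 * pi * (2 * real (card Z) / real m)"
      by (simp add: abs_mult field_simps)
    then show ?thesis
      by (rule mult_left_le_imp_le) simp
  qed
  then have "(\<lambda>m. riemann_section m s - ?I / (2 * pi)) \<longlonglongrightarrow> 0"
    by (intro Lim_null_comparison[OF _ lim_const_over_n[of "2 * real (card Z)"]])
       (auto simp: eventually_sequentially intro: exI[of _ 1])
  then show ?thesis
    by (simp add: LIM_zero_iff)
qed

theorem line_average_tendsto_torus_average:
  "(\<lambda>m. 1 / (2 * pi) * integral {0..2 * pi} (\<lambda>t. \<phi> t (real m * t)))
     \<longlonglongrightarrow> 1 / (2 * pi)^2 * integral {0..2 * pi} (\<lambda>t. integral {0..2 * pi} (\<lambda>s. \<phi> t s))"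
proof -
  let ?S = "{0..2 * pi}"
  let ?G = "\<lambda>s. integral ?S (\<lambda>t. \<phi> t s) / (2 * pi)"
  have "(\<lambda>m. integral ?S (riemann_section m)) \<longlonglongrightarrow> integral ?S ?G"
  proof (rule dominated_convergence(2)[where h="\<lambda>_. 1"])
    show "riemann_section m integrable_on ?S" for m
      using bounded_measurable_integrable_on_Icc[OF borel_measurable_riemann_section, of m 1]
        riemann_section_bounds by simp
    show "norm (riemann_section m s) \<le> 1" for m s
      using riemann_section_bounds[of m s] by simp
  qed (simp_all add: integrable_const_ivl riemann_section_tendsto)
  moreover have "\<forall>\<^sub>F m in sequentially.
      integral ?S (riemann_section m) = integral ?S (\<lambda>t. \<phi> t (real m * t))"
    using eventually_gt_at_top[of 0] by eventually_elim (simp add: integral_line_eq_integral_riemann_section)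
  ultimately have "(\<lambda>m. integral ?S (\<lambda>t. \<phi> t (real m * t))) \<longlonglongrightarrow> integral ?S ?G"
    by (rule Lim_transform_eventually)
  moreover have "integral ?S ?G = integral ?S (\<lambda>t. integral ?S (\<lambda>s. \<phi> t s)) / (2 * pi)"
    using integral_Icc_swap_bounded_measurable[OF measurable, of 1 0 "2 * pi"] bounds
    by (simp add: integral_divide)
  ultimately have "(\<lambda>m. integral ?S (\<lambda>t. \<phi> t (real m * t)))
      \<longlonglongrightarrow> integral ?S (\<lambda>t. integral ?S (\<lambda>s. \<phi> t s)) / (2 * pi)"
    by simp
  from tendsto_mult_left[OF this, of "1 / (2 * pi)"] show ?thesis
    by (simp add: power2_eq_square)
qed

end

context
  fixes k :: nat and a :: "nat \<Rightarrow> real" and e1 e2 :: "nat \<Rightarrow> int"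
begin

definition g2_torus :: "real \<Rightarrow> real \<Rightarrow> real" where
  "g2_torus t1 t2 = - (\<Sum>j=1..k. a j * cos (of_int (e1 j) * t1 + of_int (e2 j) * t2))"

lemma g2_cis: "g2 k a e1 e2 (cis t1) (cis t2) = of_real (g2_torus t1 t2)"
proof -
  define \<theta> where "\<theta> j = of_int (e1 j) * t1 + of_int (e2 j) * t2" for j
  have "cis t1 powi e1 j * cis t2 powi e2 j = cis (\<theta> j)"
    and "inverse (cis t1) powi e1 j * inverse (cis t2) powi e2 j = cis (- \<theta> j)" for j
    by (simp_all add: \<theta>_def cis_power_int cis_mult)
  then have "g2 k a e1 e2 (cis t1) (cis t2) = - (1/2) * (\<Sum>j=1..k. of_real (a j) * (cis (\<theta> j) + cis (- \<theta> j)))"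
    by (simp add: g2_def Qpoly_def mult.assoc distrib_left sum.distrib del: cis_inverse)
  also have "\<dots> = of_real (g2_torus t1 t2)"
  proof -
    have cis_cos: "cis x + cis (- x) = 2 * of_real (cos x)" for x
      by (simp add: complex_eq_iff)
    show ?thesis
      unfolding cis_cos g2_torus_def \<theta>_def by (simp add: sum_distrib_left sum_negf)
  qed
  finally show ?thesis .
qed

lemma g2bar_cis: "g2bar k a e1 e2 (cis t1) (cis t2) = (if 1 \<le> \<bar>g2_torus t1 t2\<bar> then 1 else 0)"
  by (simp add: g2bar_def g2_cis)

lemma continuous_on_g2_torus [continuous_intros]:
  fixes f g :: "'a::t2_space \<Rightarrow> real"
  assumes "continuous_on A f" "continuous_on A g"
  shows "continuous_on A (\<lambda>x. g2_torus (f x) (g x))"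
  unfolding g2_torus_def by (intro continuous_intros assms)

lemma g2_torus_level_set_finite:
  "(\<forall>t. \<bar>g2_torus t s\<bar> = 1) \<or> finite {t \<in> {p..q}. \<bar>g2_torus t s\<bar> = 1}"
proof -
  define H where
    "H z = (\<Sum>j=1..k. of_real (a j) * cos (of_int (e1 j) * z + of_real (of_int (e2 j) * s)))^2 - 1" for z :: complex
  have H_real: "H (of_real t) = 0 \<longleftrightarrow> \<bar>g2_torus t s\<bar> = 1" for t
  proof -
    have "H (of_real t) = of_real ((g2_torus t s)^2 - 1)"
      by (simp add: H_def g2_torus_def flip: cos_of_real)
    then show ?thesis
      by (metis abs_square_eq_1 eq_iff_diff_eq_0 of_real_eq_0_iff)
  qed
  have "H holomorphic_on UNIV"
    unfolding H_def by (intro holomorphic_intros)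
  from entire_real_zeros_Icc_finite[OF this, of p q] show ?thesis
    unfolding H_real by (auto simp flip: H_real)
qed

lemma g2_torus_level_crossing:
  assumes "p \<le> q" and "(1 \<le> \<bar>g2_torus p s\<bar>) \<noteq> (1 \<le> \<bar>g2_torus q s\<bar>)"
  shows "\<exists>z\<in>{p..q}. \<bar>g2_torus z s\<bar> = 1"
proof -
  have "continuous_on {p..q} (\<lambda>t. \<bar>g2_torus t s\<bar>)"
    by (intro continuous_intros)
  with assms show ?thesis
    using IVT'[of "\<lambda>t. \<bar>g2_torus t s\<bar>" p 1 q] IVT2'[of "\<lambda>t. \<bar>g2_torus t s\<bar>" q 1 p]
    by (cases "1 \<le> \<bar>g2_torus p s\<bar>") auto
qed

lemma torus_step_function_g2bar: "torus_step_function (\<lambda>t1 t2. g2bar k a e1 e2 (cis t1) (cis t2))"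
proof
  let ?C = "{p. 1 \<le> \<bar>g2_torus (fst p) (snd p)\<bar>}"
  have "closed ?C"
    by (intro closed_Collect_le continuous_intros)
  then have "indicator ?C \<in> borel_measurable borel"
    by (intro borel_measurable_indicator borel_closed)
  moreover have "(\<lambda>p. g2bar k a e1 e2 (cis (fst p)) (cis (snd p))) = indicator ?C"
    by (simp add: g2bar_cis indicator_def fun_eq_iff)
  ultimately show "(\<lambda>p. g2bar k a e1 e2 (cis (fst p)) (cis (snd p))) \<in> borel_measurable borel"
    by simp
next
  show "0 \<le> g2bar k a e1 e2 (cis t) (cis s) \<and> g2bar k a e1 e2 (cis t) (cis s) \<le> 1" for t s
    by (simp add: g2bar_def)
next
  show "g2bar k a e1 e2 (cis t) (cis (s + 2 * pi * real j)) = g2bar k a e1 e2 (cis t) (cis s)" for t s j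
    by (simp add: cis_mult[symmetric])
next
  fix s
  let ?Z = "{t \<in> {0..2 * pi}. \<bar>g2_torus t s\<bar> = 1}"
  consider "\<forall>t. \<bar>g2_torus t s\<bar> = 1" | "finite ?Z"
    using g2_torus_level_set_finite by blast
  then show "\<exists>Z. finite Z \<and> (\<forall>p q. 0 \<le> p \<longrightarrow> p \<le> q \<longrightarrow> q \<le> 2 * pi \<longrightarrow>
               g2bar k a e1 e2 (cis p) (cis s) \<noteq> g2bar k a e1 e2 (cis q) (cis s) \<longrightarrow> (\<exists>z\<in>Z. p \<le> z \<and> z \<le> q))"
  proof cases
    case 1
    then show ?thesis
      by (intro exI[of _ "{}"]) (simp add: g2bar_cis)
  next
    case 2
    have "\<exists>z\<in>?Z. p \<le> z \<and> z \<le> q"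
      if "0 \<le> p" "p \<le> q" "q \<le> 2 * pi" "g2bar k a e1 e2 (cis p) (cis s) \<noteq> g2bar k a e1 e2 (cis q) (cis s)"
      for p q
    proof -
      have "(1 \<le> \<bar>g2_torus p s\<bar>) \<noteq> (1 \<le> \<bar>g2_torus q s\<bar>)"
        using that(4) by (auto simp: g2bar_cis split: if_splits)
      with g2_torus_level_crossing[of p q s] that(2) obtain z where "z \<in> {p..q}" "\<bar>g2_torus z s\<bar> = 1"
        by blast
      with that(1,3) show ?thesis
        by (intro bexI[of _ z]) auto
    qed
    with 2 show ?thesis
      by blast
  qed
qed

end

theorem theorem3:
  fixes k :: nat and a :: "nat \<Rightarrow> real" and e1 e2 :: "nat \<Rightarrow> int"
  shows "(\<lambda>m. LC1 k a e1 e2 m) \<longlonglongrightarrow> LC2 k a e1 e2"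
  unfolding LC1_def LC2_def cis_conv_exp[symmetric]
  by (rule torus_step_function.line_average_tendsto_torus_average[OF torus_step_function_g2bar])

end
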